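(* Let $F:\mathbb{R}^p\to\mathbb{R}^p$ be single-valued and $L$-Lipschitz continuous, $T:\mathbb{R}^p\rightrightarrows\mathbb{R}^p$, and suppose $\Phi:=F+T$ is maximally monotone. Let $\eta>0$ and let $\{(x^k,y^k)\}$ be generated by: start from $x^0\in\mathrm{dom}\,\Phi$, set $x^{-1}:=x^0$, and for $k\ge0$ $$y^k:=2x^k-x^{k-1},\qquad x^{k+1}:=J_{\eta T}(x^k-\eta Fy^k).$$ For $k\ge1$ let $\xi^k:=\frac1\eta(x^{k-1}-x^k)-Fy^{k-1}\in Tx^k$. Then for every $k\ge1$, $$\|Fx^k+\xi^k\|^2\le\frac{5L^2\eta^2+3}{3\eta^2}\|x^k-y^k\|^2+\frac{5L^2\eta^2+3}{5\eta^2}\|x^k-y^{k-1}\|^2.$$ Moreover, if $\sqrt2L\eta<1$, then with $\omega:=\frac{2L^2\eta^2}{1-2L^2\eta^2}>0$, for every $k\ge1$, $$\begin{aligned}\|Fx^{k+1}+\xi^{k+1}\|^2+\omega\|Fx^{k+1}-Fy^k\|^2\le{}&\|Fx^k+\xi^k\|^2+\omega\|Fx^k-Fy^{k-1}\|^2\\&-\Big(\frac{1-4L^2\eta^2}{1-2L^2\eta^2}\Big)\|Fy^k-Fx^k+\xi^{k+1}-\xi^k\|^2.\end{aligned}$$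
   Context: $J_{\eta T}:=(\mathbb{I}+\eta T)^{-1}$ is the resolvent of $\eta T$. $F$ is $L$-Lipschitz if $\|Fx-Fy\|\le L\|x-y\|$. *)

theory Defs
  imports "HOL-Analysis.Analysis"
begin

definition monotone_op :: "('a::real_inner \<Rightarrow> 'a set) \<Rightarrow> bool" where
  "monotone_op A \<longleftrightarrow>
     (\<forall>x y u v. u \<in> A x \<longrightarrow> v \<in> A y \<longrightarrow> inner (u - v) (x - y) \<ge> 0)"

definition maximal_monotone :: "('a::real_inner \<Rightarrow> 'a set) \<Rightarrow> bool" where
  "maximal_monotone A \<longleftrightarrow> monotone_op A \<and>
     (\<forall>x u. (\<forall>y v. v \<in> A y \<longrightarrow> inner (u - v) (x - y) \<ge> 0) \<longrightarrow> u \<in> A x)"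

definition op_dom :: "('a \<Rightarrow> 'b set) \<Rightarrow> 'a set" where
  "op_dom A = {x. A x \<noteq> {}}"

definition op_plus :: "('a \<Rightarrow> 'a::real_vector) \<Rightarrow> ('a \<Rightarrow> 'a set) \<Rightarrow> 'a \<Rightarrow> 'a set" where
  "op_plus F T x = (\<lambda>v. F x + v) ` T x"

text \<open>Resolvent J_{eta T} = (I + eta T)^{-1}, as a set-valued map.\<close>
definition resolvent :: "real \<Rightarrow> ('a::real_vector \<Rightarrow> 'a set) \<Rightarrow> 'a \<Rightarrow> 'a set" where
  "resolvent \<eta> T u = {x. \<exists>v \<in> T x. u = x + \<eta> *\<^sub>R v}"

end

theory Submission
  imports Defs
begin

text \<open>Write \<open>w k = F (x k) + \<xi> k\<close> and \<open>d k = F (x k) - F (y (k - 1))\<close>. One step of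
  the iteration reads \<open>x (k + 1) - x k = -\<eta> (w (k + 1) - d (k + 1))\<close> and
  \<open>x (k + 1) - y k = -\<eta> (z + d k)\<close> with \<open>z = w (k + 1) - w k - d (k + 1)\<close>.
  Monotonicity of \<open>F + T\<close> along the first identity gives
  \<open>\<parallel>w (k + 1)\<parallel>\<^sup>2 \<le> \<parallel>w k\<parallel>\<^sup>2 + \<parallel>d (k + 1)\<parallel>\<^sup>2 - \<parallel>z\<parallel>\<^sup>2\<close>, Lipschitz continuity of \<open>F\<close>
  along the second gives \<open>\<parallel>d (k + 1)\<parallel>\<^sup>2 \<le> 2L\<^sup>2\<eta>\<^sup>2 (\<parallel>z\<parallel>\<^sup>2 + \<parallel>d k\<parallel>\<^sup>2)\<close>, and adding
  \<open>\<omega>\<close> times the latter to the former is the descent of \<open>\<parallel>w k\<parallel>\<^sup>2 + \<omega> \<parallel>d k\<parallel>\<^sup>2\<close>.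
  The first estimate is the triangle inequality for \<open>w k = d k + (x k - y k) / \<eta>\<close>
  followed by Young's inequality.\<close>

lemma weighted_sum_squares_bound:
  fixes a b c :: real
  assumes "c > 0"
  shows "2 * a * b \<le> c * a\<^sup>2 + b\<^sup>2 / c"
proof -
  have "0 \<le> (c * a - b)\<^sup>2 / c" using assms by simp
  also have "\<dots> = c * a\<^sup>2 + b\<^sup>2 / c - 2 * a * b"
    using assms by (simp add: power2_eq_square field_simps)
  finally show ?thesis by simp
qed

lemma power2_norm_add_le:
  fixes a b :: "'a::real_normed_vector"
  shows "(norm (a + b))\<^sup>2 \<le> 2 * (norm a)\<^sup>2 + 2 * (norm b)\<^sup>2"
proof -
  have "(norm (a + b))\<^sup>2 \<le> (norm a + norm b)\<^sup>2"
    by (simp add: norm_triangle_ineq power_mono)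
  also have "\<dots> \<le> 2 * (norm a)\<^sup>2 + 2 * (norm b)\<^sup>2"
    using sum_squares_bound[of "norm a" "norm b"] by (simp add: power2_sum)
  finally show ?thesis .
qed

lemma power2_norm_le_of_inner_diff_nonpos:
  fixes u v d :: "'a::real_inner"
  assumes "inner (u - v) (u - d) \<le> 0"
  shows "(norm u)\<^sup>2 \<le> (norm v)\<^sup>2 + (norm d)\<^sup>2 - (norm (u - v - d))\<^sup>2"
proof -
  have "(norm v)\<^sup>2 + (norm d)\<^sup>2 - (norm (u - v - d))\<^sup>2 = (norm u)\<^sup>2 - 2 * inner (u - v) (u - d)"
    by (simp add: power2_norm_eq_inner inner_diff_left inner_diff_right inner_commute)
  with assms show ?thesis by simp
qed

lemma lyapunov_combination_le:
  fixes W\<^sub>0 W\<^sub>1 D\<^sub>0 D\<^sub>1 Z r :: real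
  assumes W: "W\<^sub>1 \<le> W\<^sub>0 + D\<^sub>1 - Z" and D: "D\<^sub>1 \<le> r * (2 * Z + 2 * D\<^sub>0)"
    and "0 \<le> r" "2 * r < 1"
  shows "W\<^sub>1 + 2 * r / (1 - 2 * r) * D\<^sub>1
    \<le> W\<^sub>0 + 2 * r / (1 - 2 * r) * D\<^sub>0 - ((1 - 4 * r) / (1 - 2 * r)) * Z"
proof -
  define \<omega> where "\<omega> = 2 * r / (1 - 2 * r)"
  have "\<omega> \<ge> 0" and factor: "(1 + \<omega>) * (2 * r) = \<omega>"
    and coeff: "(1 - 4 * r) / (1 - 2 * r) = 1 - \<omega>"
    using assms(3,4) by (simp_all add: \<omega>_def field_simps)
  have "(1 + \<omega>) * D\<^sub>1 \<le> (1 + \<omega>) * (2 * r) * (Z + D\<^sub>0)"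
    using mult_left_mono[OF D, of "1 + \<omega>"] \<open>\<omega> \<ge> 0\<close> by (simp add: algebra_simps)
  then have "W\<^sub>1 + \<omega> * D\<^sub>1 \<le> W\<^sub>0 + \<omega> * D\<^sub>0 - (1 - \<omega>) * Z"
    using W unfolding factor by (simp add: algebra_simps)
  then show ?thesis
    unfolding \<omega>_def[symmetric] coeff .
qed

locale reflected_forward_backward =
  fixes F :: "'a::real_inner \<Rightarrow> 'a" and T :: "'a \<Rightarrow> 'a set"
    and L \<eta> :: real and x y \<xi> :: "nat \<Rightarrow> 'a"
  assumes lipschitz: "L-lipschitz_on UNIV F"
    and monotone: "monotone_op (op_plus F T)"
    and eta_pos: "\<eta> > 0"
    and y_def: "\<And>k. y k = 2 *\<^sub>R x k - x (k - 1)"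
      \<comment> \<open>truncated subtraction \<open>0 - 1 = 0\<close> encodes the convention \<open>x\<^sup>-\<^sup>1 = x\<^sup>0\<close>\<close>
    and x_step: "\<And>k. x (Suc k) \<in> resolvent \<eta> T (x k - \<eta> *\<^sub>R F (y k))"
    and xi_def: "\<And>k. k \<ge> 1 \<Longrightarrow> \<xi> k = (1 / \<eta>) *\<^sub>R (x (k - 1) - x k) - F (y (k - 1))"
begin

lemma lipschitz_nonneg: "0 \<le> L"
  using lipschitz by (simp add: lipschitz_on_def)

lemma norm_F_diff_le: "norm (F a - F b) \<le> L * norm (a - b)"
  using lipschitz by (simp add: lipschitz_on_def dist_norm)

lemma x_Suc_diff: "x (Suc k) - x k = - \<eta> *\<^sub>R (\<xi> (Suc k) + F (y k))"
proof -
  have "\<eta> *\<^sub>R (\<xi> (Suc k) + F (y k)) = x k - x (Suc k)"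
    using xi_def[of "Suc k"] eta_pos by simp
  then show ?thesis by (simp add: algebra_simps)
qed

lemma xi_mem_T: "\<xi> (Suc k) \<in> T (x (Suc k))"
proof -
  obtain v where v: "v \<in> T (x (Suc k))" "x k - \<eta> *\<^sub>R F (y k) = x (Suc k) + \<eta> *\<^sub>R v"
    using x_step[of k] unfolding resolvent_def by blast
  have "\<eta> *\<^sub>R \<xi> (Suc k) = \<eta> *\<^sub>R v"
    using x_Suc_diff[of k] v(2) by (simp add: algebra_simps)
  with v(1) eta_pos show ?thesis by simp
qed

lemma F_plus_xi_mem: "k \<ge> 1 \<Longrightarrow> F (x k) + \<xi> k \<in> op_plus F T (x k)"
  using xi_mem_T[of "k - 1"] unfolding op_plus_def by simp

lemma x_diff_y: "x k - y k = x (k - 1) - x k"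
  using y_def[of k] by (simp add: algebra_simps scaleR_2)

lemma residual_bound:
  assumes "k \<ge> 1"
  shows "(norm (F (x k) + \<xi> k))\<^sup>2 \<le>
            (5 * L\<^sup>2 * \<eta>\<^sup>2 + 3) / (3 * \<eta>\<^sup>2) * (norm (x k - y k))\<^sup>2
          + (5 * L\<^sup>2 * \<eta>\<^sup>2 + 3) / (5 * \<eta>\<^sup>2) * (norm (x k - y (k - 1)))\<^sup>2"
proof -
  define A where "A = norm (x k - y (k - 1))"
  define B where "B = norm (x k - y k)"
  have "F (x k) + \<xi> k = (F (x k) - F (y (k - 1))) + (1 / \<eta>) *\<^sub>R (x k - y k)"
    unfolding x_diff_y xi_def[OF assms] by (simp add: algebra_simps)
  then have "norm (F (x k) + \<xi> k) \<le> norm (F (x k) - F (y (k - 1))) + norm ((1 / \<eta>) *\<^sub>R (x k - y k))"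
    by (metis norm_triangle_ineq)
  also have "\<dots> \<le> L * A + B / \<eta>"
    using norm_F_diff_le eta_pos by (simp add: A_def B_def)
  finally have "norm (F (x k) + \<xi> k) \<le> L * A + B / \<eta>" .
  then have "(norm (F (x k) + \<xi> k))\<^sup>2 \<le> (L * A + B / \<eta>)\<^sup>2"
    by (simp add: power_mono)
  also have "\<dots> = L\<^sup>2 * A\<^sup>2 + 2 * (L * B) * (A / \<eta>) + B\<^sup>2 / \<eta>\<^sup>2"
    using eta_pos by (simp add: power2_eq_square field_simps)
  also have "\<dots> \<le> L\<^sup>2 * A\<^sup>2 + (5 / 3 * (L * B)\<^sup>2 + (A / \<eta>)\<^sup>2 / (5 / 3)) + B\<^sup>2 / \<eta>\<^sup>2"
    using weighted_sum_squares_bound[of "5 / 3" "L * B" "A / \<eta>"] by simp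
  also have "\<dots> = (5 * L\<^sup>2 * \<eta>\<^sup>2 + 3) / (3 * \<eta>\<^sup>2) * B\<^sup>2 + (5 * L\<^sup>2 * \<eta>\<^sup>2 + 3) / (5 * \<eta>\<^sup>2) * A\<^sup>2"
    using eta_pos by (simp add: power2_eq_square field_simps)
  finally show ?thesis by (simp add: A_def B_def)
qed

lemma residual_step_le:
  assumes "k \<ge> 1"
  shows "(norm (F (x (Suc k)) + \<xi> (Suc k)))\<^sup>2
    \<le> (norm (F (x k) + \<xi> k))\<^sup>2 + (norm (F (x (Suc k)) - F (y k)))\<^sup>2
      - (norm (F (y k) - F (x k) + \<xi> (Suc k) - \<xi> k))\<^sup>2"
proof -
  let ?w\<^sub>1 = "F (x (Suc k)) + \<xi> (Suc k)" and ?w\<^sub>0 = "F (x k) + \<xi> k"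
    and ?d = "F (x (Suc k)) - F (y k)"
  have "0 \<le> inner (?w\<^sub>1 - ?w\<^sub>0) (x (Suc k) - x k)"
    using monotone F_plus_xi_mem[of "Suc k"] F_plus_xi_mem[OF assms]
    unfolding monotone_op_def by simp
  also have "x (Suc k) - x k = - \<eta> *\<^sub>R (?w\<^sub>1 - ?d)"
    using x_Suc_diff[of k] by (simp add: algebra_simps)
  finally have "inner (?w\<^sub>1 - ?w\<^sub>0) (?w\<^sub>1 - ?d) \<le> 0"
    using eta_pos by (simp add: mult_le_0_iff)
  from power2_norm_le_of_inner_diff_nonpos[OF this]
  show ?thesis by (simp add: algebra_simps)
qed

lemma F_diff_bound:
  assumes "k \<ge> 1"
  shows "(norm (F (x (Suc k)) - F (y k)))\<^sup>2
    \<le> L\<^sup>2 * \<eta>\<^sup>2 * (2 * (norm (F (y k) - F (x k) + \<xi> (Suc k) - \<xi> k))\<^sup>2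
                    + 2 * (norm (F (x k) - F (y (k - 1))))\<^sup>2)"
proof -
  let ?z = "F (y k) - F (x k) + \<xi> (Suc k) - \<xi> k" and ?d = "F (x k) - F (y (k - 1))"
  have "x (Suc k) - y k = (x (Suc k) - x k) - (x (Suc (k - 1)) - x (k - 1))"
    using y_def[of k] assms by (simp add: algebra_simps scaleR_2)
  also have "\<dots> = - \<eta> *\<^sub>R (?z + ?d)"
    unfolding x_Suc_diff using assms by (simp add: algebra_simps)
  finally have "norm (F (x (Suc k)) - F (y k)) \<le> L * \<eta> * norm (?z + ?d)"
    using norm_F_diff_le[of "x (Suc k)" "y k"] eta_pos by simp
  then have "(norm (F (x (Suc k)) - F (y k)))\<^sup>2 \<le> (L * \<eta> * norm (?z + ?d))\<^sup>2"
    by (rule power_mono) simp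
  also have "\<dots> = L\<^sup>2 * \<eta>\<^sup>2 * (norm (?z + ?d))\<^sup>2"
    by (simp add: power_mult_distrib)
  also have "\<dots> \<le> L\<^sup>2 * \<eta>\<^sup>2 * (2 * (norm ?z)\<^sup>2 + 2 * (norm ?d)\<^sup>2)"
    by (intro mult_left_mono power2_norm_add_le) simp
  finally show ?thesis .
qed

lemma residual_descent:
  assumes "2 * L\<^sup>2 * \<eta>\<^sup>2 < 1" and "k \<ge> 1"
  shows "(norm (F (x (Suc k)) + \<xi> (Suc k)))\<^sup>2
           + 2 * L\<^sup>2 * \<eta>\<^sup>2 / (1 - 2 * L\<^sup>2 * \<eta>\<^sup>2) * (norm (F (x (Suc k)) - F (y k)))\<^sup>2
         \<le> (norm (F (x k) + \<xi> k))\<^sup>2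
           + 2 * L\<^sup>2 * \<eta>\<^sup>2 / (1 - 2 * L\<^sup>2 * \<eta>\<^sup>2) * (norm (F (x k) - F (y (k - 1))))\<^sup>2
           - ((1 - 4 * L\<^sup>2 * \<eta>\<^sup>2) / (1 - 2 * L\<^sup>2 * \<eta>\<^sup>2))
             * (norm (F (y k) - F (x k) + \<xi> (Suc k) - \<xi> k))\<^sup>2"
  using lyapunov_combination_le[OF residual_step_le[OF assms(2)] F_diff_bound[OF assms(2)]] assms(1)
  by (simp add: mult.assoc)

end

theorem lemma8:
  fixes F :: "real^'p \<Rightarrow> real^'p" and T :: "real^'p \<Rightarrow> (real^'p) set"
    and L \<eta> :: real and x y \<xi> :: "nat \<Rightarrow> real^'p"
  assumes lip: "L-lipschitz_on UNIV F"
    and maxmon: "maximal_monotone (op_plus F T)"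
    and eta: "\<eta> > 0"
    and x0: "x 0 \<in> op_dom (op_plus F T)"
    and y_def: "\<And>k. y k = 2 *\<^sub>R x k - x (k - 1)"
    and x_step: "\<And>k. x (Suc k) \<in> resolvent \<eta> T (x k - \<eta> *\<^sub>R F (y k))"
    and xi_def: "\<And>k. k \<ge> 1 \<Longrightarrow> \<xi> k = (1 / \<eta>) *\<^sub>R (x (k - 1) - x k) - F (y (k - 1))"
  shows "(\<forall>k\<ge>1. (norm (F (x k) + \<xi> k))\<^sup>2 \<le>
            (5 * L\<^sup>2 * \<eta>\<^sup>2 + 3) / (3 * \<eta>\<^sup>2) * (norm (x k - y k))\<^sup>2
          + (5 * L\<^sup>2 * \<eta>\<^sup>2 + 3) / (5 * \<eta>\<^sup>2) * (norm (x k - y (k - 1)))\<^sup>2)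
       \<and> (sqrt 2 * L * \<eta> < 1 \<longrightarrow>
           (let \<omega> = 2 * L\<^sup>2 * \<eta>\<^sup>2 / (1 - 2 * L\<^sup>2 * \<eta>\<^sup>2) in
            \<forall>k\<ge>1. (norm (F (x (Suc k)) + \<xi> (Suc k)))\<^sup>2
                     + \<omega> * (norm (F (x (Suc k)) - F (y k)))\<^sup>2
                   \<le> (norm (F (x k) + \<xi> k))\<^sup>2 + \<omega> * (norm (F (x k) - F (y (k - 1))))\<^sup>2
                     - ((1 - 4 * L\<^sup>2 * \<eta>\<^sup>2) / (1 - 2 * L\<^sup>2 * \<eta>\<^sup>2))
                       * (norm (F (y k) - F (x k) + \<xi> (Suc k) - \<xi> k))\<^sup>2))"
proof -
  interpret reflected_forward_backward F T L \<eta> x y \<xi>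
  proof
    show "monotone_op (op_plus F T)"
      using maxmon unfolding maximal_monotone_def by blast
  qed (use lip eta y_def x_step xi_def in auto)
  have "sqrt 2 * L * \<eta> < 1 \<Longrightarrow> 2 * L\<^sup>2 * \<eta>\<^sup>2 < 1"
    using power_less_one_iff[of "sqrt 2 * L * \<eta>" 2] lipschitz_nonneg eta
    by (simp add: power_mult_distrib)
  then show ?thesis
    using residual_bound residual_descent unfolding Let_def by blast
qed

end
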